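(* Let $Q\subset\mathrm{EX}(M)$ be a countable set of pairwise compatible extensions such that for each $(\alpha,U)\in Q$ the set $N_{(\alpha,U)}$ is a manifold with boundary. Then $Q(M)$ is a topological manifold with boundary.
   Context: Conventions: $M$ is an $n$-dimensional smooth manifold (Hausdorff, second countable) with maximal $C^\infty$ atlas $\mathcal{A}(M)$; every chart $\alpha$ has open domain $\mathrm{dom}(\alpha)\subset M$ and open range $\mathrm{ran}(\alpha)\subset\mathbb{R}^n$. For $A\subset\mathbb{R}^n$, $\partial A$ is its boundary in $\mathbb{R}^n$; for $A\subset U\subset\mathbb{R}^n$, $\partial_U A$ is the boundary of $A$ relative to $U$. A (topological) manifold with boundary is a second countable Hausdorff space locally homeomorphic to $\mathbb{R}^{n-1}\times[0,\infty)$. An admissible boundary point of $\alpha$ is a $p\in\partial\,\mathrm{ran}(\alpha)$ such that every sequence $(x_i)\subset\mathrm{dom}(\alpha)$ with $\alpha(x_i)\to p$ has no accumulation point in $M$; $B(\alpha)$ is the set of these. An extension is a pair $(\alpha,U)$, $U\subset\mathbb{R}^n$ open, $\mathrm{ran}(\alpha)\subset U$, $\emptyset\ne\partial_U\mathrm{ran}(\alpha)\subset B(\alpha)$; $\mathrm{EX}(M)$ is the set of extensions. A boundary set is $(\alpha,U,V)$ with $(\alpha,U)\in\mathrm{EX}(M)$, $V\subset B(\alpha)\cap U$ (a boundary point if $V=\{p\}$). $(\alpha,U,V)$ covers $(\beta,X,Y)$ if for every sequence $(y_i)\subset\mathrm{dom}(\beta)$ with $(\beta(y_i))$ having an accumulation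 point in $Y$ there is a subsequence $(v_i)\subset\mathrm{dom}(\alpha)$ of $(y_i)$ with $(\alpha(v_i))$ having an accumulation point in $V$; they are equivalent, $\equiv$, if each covers the other. Boundary points $(\alpha,U,\{p\})$, $(\beta,X,\{q\})$ are in contact if there is a sequence $(x_i)\subset\mathrm{dom}(\alpha)\cap\mathrm{dom}(\beta)$ with $\alpha(x_i)\to p$ and $\beta(x_i)\to q$. Extensions $(\alpha,U)$, $(\beta,X)$ are compatible if for all $p\in B(\alpha)\cap U$, $q\in B(\beta)\cap X$, being in contact implies $(\alpha,U,\{p\})\equiv(\beta,X,\{q\})$. Completion: for $Q\subset\mathrm{EX}(M)$ let $P=\{(\alpha,\mathrm{ran}(\alpha)):\alpha\in\mathcal{A}(M)\}$, $S_Q=P\cup Q$, $N_{(\alpha,U)}=\mathrm{ran}(\alpha)\cup\partial_U\mathrm{ran}(\alpha)$ with subspace topology of $\mathbb{R}^n$, $N_Q=\bigsqcup_{(\alpha,U)\in S_Q}N_{(\alpha,U)}$ with disjoint-union topology. Identify $x\in N_{(\alpha,U)}$ with $y\in N_{(\beta,X)}$ iff either $x\in\mathrm{ran}(\alpha)$, $y\in\mathrm{ran}(\beta)$, $\beta\circ\alpha^{-1}(x)=y$, or $x\in\partial_U\mathrm{ran}(\alpha)$, $y\in\partial_X\mathrm{ran}(\beta)$, $(\alpha,U,\{x\})\equiv(\beta,X,\{y\})$. $Q(M)$ is the quotient space with the quotient topology. *)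

theory Defs
  imports "HOL-Analysis.Analysis"
begin

text \<open>A map is C-infinity on an open set U iff it is differentiable on U and all its
  directional derivatives (as functions of the base point) are again C-infinity on U;
  i.e. it is differentiable of all orders (which implies continuity of all derivatives).\<close>
coinductive smooth_on :: "('a::real_normed_vector \<Rightarrow> 'b::real_normed_vector) \<Rightarrow> 'a set \<Rightarrow> bool"
  where
  "f differentiable_on U \<Longrightarrow> (\<forall>v. smooth_on (\<lambda>x. frechet_derivative f (at x) v) U)
     \<Longrightarrow> smooth_on f U"

type_synonym ('a, 'n) chart = "'a set \<times> ('a \<Rightarrow> real^'n)"

definition dom_c :: "('a, 'n) chart \<Rightarrow> 'a set" where "dom_c c = fst c"
definition map_c :: "('a, 'n) chart \<Rightarrow> 'a \<Rightarrow> real^'n" where "map_c c = snd c"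
definition ran_c :: "('a, 'n) chart \<Rightarrow> (real^'n) set" where "ran_c c = map_c c ` dom_c c"

definition is_chart :: "('a::topological_space, 'n::finite) chart \<Rightarrow> bool" where
  "is_chart c \<longleftrightarrow> open (dom_c c) \<and> open (ran_c c) \<and>
     (\<exists>g. homeomorphism (dom_c c) (ran_c c) (map_c c) g)"

definition smooth_compat :: "('a::topological_space, 'n::finite) chart \<Rightarrow> ('a, 'n) chart \<Rightarrow> bool" where
  "smooth_compat c d \<longleftrightarrow>
     smooth_on (\<lambda>z. map_c d (inv_into (dom_c c) (map_c c) z)) (map_c c ` (dom_c c \<inter> dom_c d)) \<and>
     smooth_on (\<lambda>z. map_c c (inv_into (dom_c d) (map_c d) z)) (map_c d ` (dom_c c \<inter> dom_c d))"

definition smooth_atlas :: "('a::topological_space, 'n::finite) chart set \<Rightarrow> bool" where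
  "smooth_atlas A \<longleftrightarrow> (\<forall>c\<in>A. is_chart c) \<and> (\<Union>c\<in>A. dom_c c) = UNIV \<and>
     (\<forall>c\<in>A. \<forall>d\<in>A. smooth_compat c d)"

text \<open>The maximal C-infinity atlas of an n-dimensional smooth manifold structure on the
  (Hausdorff, second countable) space 'a; n = CARD('n).\<close>
definition maximal_smooth_atlas :: "('a::topological_space, 'n::finite) chart set \<Rightarrow> bool" where
  "maximal_smooth_atlas A \<longleftrightarrow> smooth_atlas A \<and>
     (\<forall>c. is_chart c \<and> (\<forall>d\<in>A. smooth_compat c d) \<longrightarrow> c \<in> A)"

definition seq_acc :: "(nat \<Rightarrow> 'b::topological_space) \<Rightarrow> 'b \<Rightarrow> bool" where
  "seq_acc x y \<longleftrightarrow> (\<forall>V. open V \<and> y \<in> V \<longrightarrow> infinite {i. x i \<in> V})"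

definition rel_bdry :: "(real^'n) set \<Rightarrow> (real^'n) set \<Rightarrow> (real^'n) set" where
  "rel_bdry U A = (subtopology euclidean U) frontier_of A"

definition adm_bdry :: "('a::topological_space, 'n::finite) chart \<Rightarrow> (real^'n) set" where
  "adm_bdry \<alpha> = {p \<in> frontier (ran_c \<alpha>).
     \<forall>x. (\<forall>i. x i \<in> dom_c \<alpha>) \<and> ((\<lambda>i. map_c \<alpha> (x i)) \<longlonglongrightarrow> p) \<longrightarrow> (\<nexists>y. seq_acc x y)}"

definition EXT :: "('a::topological_space, 'n::finite) chart set \<Rightarrow> (('a, 'n) chart \<times> (real^'n) set) set" where
  "EXT A = {(\<alpha>, U). \<alpha> \<in> A \<and> open U \<and> ran_c \<alpha> \<subseteq> U \<and>
             rel_bdry U (ran_c \<alpha>) \<noteq> {} \<and> rel_bdry U (ran_c \<alpha>) \<subseteq> adm_bdry \<alpha>}"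

definition boundary_set :: "('a::topological_space, 'n::finite) chart set \<Rightarrow>
     ('a, 'n) chart \<Rightarrow> (real^'n) set \<Rightarrow> (real^'n) set \<Rightarrow> bool" where
  "boundary_set A \<alpha> U V \<longleftrightarrow> (\<alpha>, U) \<in> EXT A \<and> V \<subseteq> adm_bdry \<alpha> \<inter> U"

definition covers :: "('a::topological_space, 'n::finite) chart \<Rightarrow> (real^'n) set \<Rightarrow> (real^'n) set \<Rightarrow>
     ('a, 'n) chart \<Rightarrow> (real^'n) set \<Rightarrow> (real^'n) set \<Rightarrow> bool" where
  "covers \<alpha> U V \<beta> X Y \<longleftrightarrow>
     (\<forall>y. (\<forall>i. y i \<in> dom_c \<beta>) \<and> (\<exists>z\<in>Y. seq_acc (\<lambda>i. map_c \<beta> (y i)) z) \<longrightarrow>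
        (\<exists>r. strict_mono r \<and> (\<forall>i. y (r i) \<in> dom_c \<alpha>) \<and>
             (\<exists>z\<in>V. seq_acc (\<lambda>i. map_c \<alpha> (y (r i))) z)))"

definition bequiv :: "('a::topological_space, 'n::finite) chart \<Rightarrow> (real^'n) set \<Rightarrow> (real^'n) set \<Rightarrow>
     ('a, 'n) chart \<Rightarrow> (real^'n) set \<Rightarrow> (real^'n) set \<Rightarrow> bool" where
  "bequiv \<alpha> U V \<beta> X Y \<longleftrightarrow> covers \<alpha> U V \<beta> X Y \<and> covers \<beta> X Y \<alpha> U V"

definition in_contact :: "('a::topological_space, 'n::finite) chart \<Rightarrow> real^'n \<Rightarrow>
     ('a, 'n) chart \<Rightarrow> real^'n \<Rightarrow> bool" where
  "in_contact \<alpha> p \<beta> q \<longleftrightarrow>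
     (\<exists>x. (\<forall>i. x i \<in> dom_c \<alpha> \<inter> dom_c \<beta>) \<and>
          ((\<lambda>i. map_c \<alpha> (x i)) \<longlonglongrightarrow> p) \<and> ((\<lambda>i. map_c \<beta> (x i)) \<longlonglongrightarrow> q))"

definition compatible_ext :: "('a::topological_space, 'n::finite) chart \<times> (real^'n) set \<Rightarrow>
     ('a, 'n) chart \<times> (real^'n) set \<Rightarrow> bool" where
  "compatible_ext e1 e2 \<longleftrightarrow> (case e1 of (\<alpha>, U) \<Rightarrow> case e2 of (\<beta>, X) \<Rightarrow>
     (\<forall>p \<in> adm_bdry \<alpha> \<inter> U. \<forall>q \<in> adm_bdry \<beta> \<inter> X.
        in_contact \<alpha> p \<beta> q \<longrightarrow> bequiv \<alpha> U {p} \<beta> X {q}))"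

definition N_ext :: "('a, 'n) chart \<times> (real^'n) set \<Rightarrow> (real^'n) set" where
  "N_ext e = (case e of (\<alpha>, U) \<Rightarrow> ran_c \<alpha> \<union> rel_bdry U (ran_c \<alpha>))"

definition N_top :: "('a, 'n) chart \<times> (real^'n) set \<Rightarrow> (real^'n) topology" where
  "N_top e = subtopology euclidean (N_ext e)"

definition S_Q :: "('a::topological_space, 'n::finite) chart set \<Rightarrow>
     (('a, 'n) chart \<times> (real^'n) set) set \<Rightarrow> (('a, 'n) chart \<times> (real^'n) set) set" where
  "S_Q A Q = {(\<alpha>, ran_c \<alpha>) | \<alpha>. \<alpha> \<in> A} \<union> Q"

definition N_Q :: "('a::topological_space, 'n::finite) chart set \<Rightarrow>
     (('a, 'n) chart \<times> (real^'n) set) set \<Rightarrow> ((('a, 'n) chart \<times> (real^'n) set) \<times> (real^'n)) topology" where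
  "N_Q A Q = sum_topology N_top (S_Q A Q)"

definition ident :: "('a::topological_space, 'n::finite) chart set \<Rightarrow>
     (('a, 'n) chart \<times> (real^'n) set) set \<Rightarrow>
     ((('a, 'n) chart \<times> (real^'n) set) \<times> (real^'n)) rel" where
  "ident A Q = {(((\<alpha>, U), x), ((\<beta>, X), y)).
      ((\<alpha>, U), x) \<in> topspace (N_Q A Q) \<and> ((\<beta>, X), y) \<in> topspace (N_Q A Q) \<and>
      ((x \<in> ran_c \<alpha> \<and> y \<in> ran_c \<beta> \<and>
          (\<exists>m \<in> dom_c \<alpha> \<inter> dom_c \<beta>. map_c \<alpha> m = x \<and> map_c \<beta> m = y)) \<or>
       (x \<in> rel_bdry U (ran_c \<alpha>) \<and> y \<in> rel_bdry X (ran_c \<beta>) \<and>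
          bequiv \<alpha> U {x} \<beta> X {y}))}"

definition quotient_topology :: "'b topology \<Rightarrow> 'b rel \<Rightarrow> 'b set topology" where
  "quotient_topology X r =
     topology (\<lambda>W. W \<subseteq> topspace X // ((r \<union> r\<inverse>)\<^sup>*) \<and> openin X (topspace X \<inter> \<Union>W))"

definition Q_M :: "('a::topological_space, 'n::finite) chart set \<Rightarrow>
     (('a, 'n) chart \<times> (real^'n) set) set \<Rightarrow>
     ((('a, 'n) chart \<times> (real^'n) set) \<times> (real^'n)) set topology" where
  "Q_M A Q = quotient_topology (N_Q A Q) (ident A Q)"

definition halfspace :: "'n::finite \<Rightarrow> (real^'n) set" where
  "halfspace k = {x. 0 \<le> x $ k}"

text \<open>Second countable Hausdorff space locally homeomorphic to the closed half space
  R^(n-1) x [0,oo) (realised as {x in R^n. x_k \<ge> 0}), n = CARD('n).\<close>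
definition manifold_with_boundary :: "('n::finite) itself \<Rightarrow> 'b topology \<Rightarrow> bool" where
  "manifold_with_boundary TYPE('n::finite) X \<longleftrightarrow>
     Hausdorff_space X \<and> second_countable X \<and>
     (\<exists>k::'n. \<forall>p \<in> topspace X. \<exists>W. openin X W \<and> p \<in> W \<and>
        (\<exists>V. openin (subtopology euclidean (halfspace k)) V \<and>
             subtopology X W homeomorphic_space subtopology euclidean V))"

end

theory Submission
  imports Defs
begin

text \<open>
  Q(M) is the quotient of the disjoint union N_Q of the pieces. After generic facts on
  quotient topologies, half spaces, sequences, charts and the covering relation between
  boundary sets, we work in the locale completion, which collects the hypotheses:
  \<^item> the generated equivalence relation is the explicit relation same_point;
  \<^item> the central lemma limits_same_point: if one sequence of M has chart images
    converging to p in one piece and to q in another, then p and q are identified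
    (admissibility excludes mixed interior/boundary limits, compatibility handles two
    boundary points);
  \<^item> consequently each projection N_e \<rightarrow> Q(M) is continuous, open (same_point_nearby) and
    injective, hence an embedding; Q(M) is Hausdorff (separation), and second countable
    because countably many pieces represent all of its points (Lindeloef and countable Q);
  \<^item> local half-space charts of the pieces are transported by the embeddings.
\<close>

section \<open>Quotient topologies by generated equivalence relations\<close>

lemma equiv_closure_sym:
  assumes "(x, y) \<in> (r \<union> r\<inverse>)\<^sup>*" shows "(y, x) \<in> (r \<union> r\<inverse>)\<^sup>*"
proof -
  have "(y, x) \<in> ((r \<union> r\<inverse>)\<inverse>)\<^sup>*" using assms by (simp add: rtrancl_converse)
  moreover have "(r \<union> r\<inverse>)\<inverse> = r \<union> r\<inverse>" by auto
  ultimately show ?thesis by simp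
qed

lemma equiv_closure_class_eq:
  assumes "(x, y) \<in> (r \<union> r\<inverse>)\<^sup>*" shows "(r \<union> r\<inverse>)\<^sup>* `` {x} = (r \<union> r\<inverse>)\<^sup>* `` {y}"
  using assms equiv_closure_sym[OF assms] by (auto intro: rtrancl_trans)

lemma equiv_closure_class_of_member:
  assumes "c \<in> T // (r \<union> r\<inverse>)\<^sup>*" "x \<in> c" shows "c = (r \<union> r\<inverse>)\<^sup>* `` {x}"
  using assms equiv_closure_class_eq by (fastforce simp: quotient_def)

lemma istopology_quotient:
  "istopology (\<lambda>W. W \<subseteq> topspace X // ((r \<union> r\<inverse>)\<^sup>*) \<and> openin X (topspace X \<inter> \<Union>W))"
proof -
  let ?P = "\<lambda>W. W \<subseteq> topspace X // ((r \<union> r\<inverse>)\<^sup>*) \<and> openin X (topspace X \<inter> \<Union>W)"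
  have "?P (S \<inter> T)" if S: "?P S" and T: "?P T" for S T
  proof -
    have "topspace X \<inter> \<Union>(S \<inter> T) = (topspace X \<inter> \<Union> S) \<inter> (topspace X \<inter> \<Union> T)"
    proof (intro equalityI subsetI)
      fix x assume x: "x \<in> (topspace X \<inter> \<Union> S) \<inter> (topspace X \<inter> \<Union> T)"
      then obtain c d where cd: "x \<in> c" "c \<in> S" "x \<in> d" "d \<in> T" by blast
      then have "c = d"
        using S T equiv_closure_class_of_member[of c "topspace X" r x]
          equiv_closure_class_of_member[of d "topspace X" r x] by blast
      with cd x show "x \<in> topspace X \<inter> \<Union>(S \<inter> T)" by blast
    qed auto
    then show ?thesis using S T by auto
  qed
  moreover have "?P (\<Union>K)" if "\<forall>W\<in>K. ?P W" for K
  proof -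
    have "topspace X \<inter> \<Union>(\<Union>K) = \<Union>((\<lambda>W. topspace X \<inter> \<Union> W) ` K)" by auto
    moreover have "openin X (\<Union>((\<lambda>W. topspace X \<inter> \<Union> W) ` K))"
      using that by (intro openin_Union) auto
    ultimately show ?thesis using that by auto
  qed
  ultimately show ?thesis unfolding istopology_def by blast
qed

lemma openin_quotient_topology:
  "openin (quotient_topology X r) W \<longleftrightarrow>
     W \<subseteq> topspace X // ((r \<union> r\<inverse>)\<^sup>*) \<and> openin X (topspace X \<inter> \<Union>W)"
  unfolding quotient_topology_def topology_inverse'[OF istopology_quotient] ..

lemma topspace_quotient_topology:
  "topspace (quotient_topology X r) = topspace X // ((r \<union> r\<inverse>)\<^sup>*)"
proof -
  have "topspace X \<inter> \<Union>(topspace X // (r \<union> r\<inverse>)\<^sup>*) = topspace X"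
    by (auto simp: quotient_def)
  then have "openin (quotient_topology X r) (topspace X // ((r \<union> r\<inverse>)\<^sup>*))"
    by (simp add: openin_quotient_topology)
  then show ?thesis
    by (metis openin_quotient_topology openin_subset openin_topspace subset_antisym)
qed

lemma continuous_map_quotient_projection:
  "continuous_map X (quotient_topology X r) (\<lambda>u. (r \<union> r\<inverse>)\<^sup>* `` {u})"
  unfolding continuous_map_def
proof (intro conjI allI impI)
  show "(\<lambda>u. (r \<union> r\<inverse>)\<^sup>* `` {u}) \<in> topspace X \<rightarrow> topspace (quotient_topology X r)"
    by (auto simp: topspace_quotient_topology quotient_def)
  fix W assume W: "openin (quotient_topology X r) W"
  then have classes: "W \<subseteq> topspace X // (r \<union> r\<inverse>)\<^sup>*"
    by (simp add: openin_quotient_topology)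
  have "{x \<in> topspace X. (r \<union> r\<inverse>)\<^sup>* `` {x} \<in> W} = topspace X \<inter> \<Union>W"
  proof (intro equalityI subsetI)
    fix x assume "x \<in> topspace X \<inter> \<Union>W"
    then obtain c where "x \<in> topspace X" "x \<in> c" "c \<in> W" by blast
    then show "x \<in> {x \<in> topspace X. (r \<union> r\<inverse>)\<^sup>* `` {x} \<in> W}"
      using equiv_closure_class_of_member[of c "topspace X" r x] classes by auto
  qed auto
  then show "openin X {x \<in> topspace X. (r \<union> r\<inverse>)\<^sup>* `` {x} \<in> W}"
    using W by (simp add: openin_quotient_topology)
qed

lemma openin_quotient_projection_image:
  assumes "S \<subseteq> topspace X" "openin X (topspace X \<inter> (r \<union> r\<inverse>)\<^sup>* `` S)"
  shows "openin (quotient_topology X r) ((\<lambda>u. (r \<union> r\<inverse>)\<^sup>* `` {u}) ` S)"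
proof -
  have "\<Union>((\<lambda>u. (r \<union> r\<inverse>)\<^sup>* `` {u}) ` S) = (r \<union> r\<inverse>)\<^sup>* `` S" by auto
  then show ?thesis
    using assms by (auto simp: openin_quotient_topology quotient_def)
qed

lemma homeomorphism_imp_homeomorphic_space:
  assumes "homeomorphism S T f g"
  shows "top_of_set S homeomorphic_space top_of_set T"
  unfolding homeomorphic_space_def homeomorphic_maps_def
  using assms unfolding homeomorphism_def
  by (intro exI[of _ f] exI[of _ g]) (auto simp: continuous_map_in_subtopology)

text \<open>The coordinate used to define the half space is immaterial: swapping two coordinates
  carries relatively open subsets of one half space onto those of another.\<close>
lemma halfspace_change_coordinate:
  fixes k k' :: "'n::finite"
  assumes V: "openin (top_of_set (halfspace k)) V"
  shows "\<exists>V'. openin (top_of_set (halfspace k')) V' \<and> top_of_set V homeomorphic_space top_of_set V'"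
proof -
  define tr where "tr i = (if i = k then k' else if i = k' then k else i)" for i
  define sw :: "real^'n \<Rightarrow> real^'n" where "sw x = (\<chi> i. x $ tr i)" for x
  have sw_sw: "sw (sw x) = x" for x unfolding sw_def tr_def by (simp add: vec_eq_iff)
  have sw_cont: "continuous_on UNIV sw" unfolding sw_def by (intro continuous_intros)
  have sw_image: "sw ` S = sw -` S" for S
    using sw_sw by (metis image_eqI subsetI vimageE image_subset_iff_subset_vimage subset_antisym vimageI)
  have hU: "homeomorphism UNIV UNIV sw sw"
    using sw_cont sw_sw by (intro homeomorphismI) auto
  obtain O1 where O1: "open O1" "V = halfspace k \<inter> O1" using V by (auto simp: openin_open)
  have "sw -` halfspace k = halfspace k'"
    unfolding halfspace_def sw_def tr_def by auto
  then have "sw ` V = halfspace k' \<inter> sw -` O1" unfolding sw_image O1(2) by auto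
  moreover have "open (sw -` O1)" using sw_cont O1(1) open_vimage by blast
  ultimately have "openin (top_of_set (halfspace k')) (sw ` V)" by (auto simp: openin_open)
  moreover have "homeomorphism V (sw ` V) sw sw"
    by (rule homeomorphism_of_subsets[OF hU]) auto
  ultimately show ?thesis using homeomorphism_imp_homeomorphic_space by blast
qed

text \<open>Open subsets of R^n are manifolds with (empty) boundary: a small ball around any point
  is homeomorphic to a ball lying inside any half space.\<close>
lemma open_locally_halfspace:
  fixes k :: "'n::finite" and S :: "(real^'n) set"
  assumes "open S" "x \<in> S"
  shows "\<exists>W. openin (top_of_set S) W \<and> x \<in> W \<and>
     (\<exists>V. openin (top_of_set (halfspace k)) V \<and>
          subtopology (top_of_set S) W homeomorphic_space top_of_set (V :: (real^'n) set))"
proof -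
  obtain r where r: "r > 0" "ball x r \<subseteq> S" using assms open_contains_ball_eq by blast
  define c :: "real^'n" where "c = (\<chi> i. 2)"
  have "ball c 1 \<subseteq> halfspace k"
  proof
    fix y assume "y \<in> ball c 1"
    then have "\<bar>(c - y) $ k\<bar> < 1"
      using component_le_norm_cart[of "c - y" k] by (simp add: dist_norm)
    then show "y \<in> halfspace k" unfolding halfspace_def c_def by simp
  qed
  then have "openin (top_of_set (halfspace k)) (ball c 1)"
    by (auto simp: openin_open intro!: exI[of _ "ball c 1"])
  moreover obtain f g where "homeomorphism (ball x r) (ball c 1) f g"
    using homeomorphic_balls(1)[OF r(1), of 1 x c] unfolding homeomorphic_def by auto
  then have "top_of_set (ball x r) homeomorphic_space top_of_set (ball c 1)"
    by (rule homeomorphism_imp_homeomorphic_space)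
  moreover have "subtopology (top_of_set S) (ball x r) = top_of_set (ball x r)"
    using r(2) by (simp add: subtopology_subtopology Int_absorb1)
  moreover have "openin (top_of_set S) (ball x r)" using openin_open_eq[OF assms(1)] r(2) by simp
  ultimately show ?thesis
    using r(1) by (intro exI[of _ "ball x r"]) auto
qed

lemma lim_imp_seq_acc:
  assumes "g \<longlonglongrightarrow> x" shows "seq_acc g x"
  unfolding seq_acc_def
proof (intro allI impI)
  fix V assume "open V \<and> x \<in> V"
  then obtain N where "\<And>i. i \<ge> N \<Longrightarrow> g i \<in> V"
    using assms by (auto simp: tendsto_def eventually_sequentially)
  then have "{N..} \<subseteq> {i. g i \<in> V}" by auto
  then show "infinite {i. g i \<in> V}" using infinite_Ici finite_subset by blast
qed

lemma seq_acc_lim_unique: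
  fixes g :: "nat \<Rightarrow> 'b::t2_space"
  assumes "seq_acc g z" "g \<longlonglongrightarrow> x" shows "z = x"
proof (rule ccontr)
  assume "z \<noteq> x"
  then obtain V W where VW: "open V" "open W" "z \<in> V" "x \<in> W" "V \<inter> W = {}"
    using hausdorff[OF \<open>z \<noteq> x\<close>] by blast
  then have "eventually (\<lambda>i. g i \<in> W) sequentially"
    using assms(2) by (simp add: tendsto_def)
  then obtain N where N: "\<And>i. i \<ge> N \<Longrightarrow> g i \<in> W"
    by (auto simp: eventually_sequentially)
  have "{i. g i \<in> V} \<subseteq> {..<N}"
  proof
    fix i assume "i \<in> {i. g i \<in> V}"
    then have "\<not> N \<le> i" using N VW(5) by blast
    then show "i \<in> {..<N}" by simp
  qed
  then have "finite {i. g i \<in> V}" using finite_subset by blast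
  then show False using assms(1) VW unfolding seq_acc_def by blast
qed

text \<open>Sequences chosen at distance below 1/(k+1) converge; used to turn negated
  epsilon-statements into sequences.\<close>
lemma tendsto_of_dist_inverse_Suc:
  fixes z :: "nat \<Rightarrow> 'b::metric_space"
  assumes "\<And>k. dist (z k) y < inverse (real (Suc k))" shows "z \<longlonglongrightarrow> y"
  unfolding lim_sequentially
proof (intro allI impI)
  fix e :: real assume "e > 0"
  then obtain N where N: "inverse (real (Suc N)) < e" using reals_Archimedean by blast
  have "dist (z n) y < e" if "n \<ge> N" for n
  proof -
    have "inverse (real (Suc n)) \<le> inverse (real (Suc N))" using that by (simp add: field_simps)
    then show ?thesis using assms[of n] N by linarith
  qed
  then show "\<exists>N. \<forall>n\<ge>N. dist (z n) y < e" by blast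
qed

definition chart_inv :: "('a, 'n) chart \<Rightarrow> real^'n \<Rightarrow> 'a" where
  "chart_inv \<alpha> x = inv_into (dom_c \<alpha>) (map_c \<alpha>) x"

lemma chart_open_ran: "is_chart \<alpha> \<Longrightarrow> open (ran_c \<alpha>)"
  and chart_open_dom: "is_chart \<alpha> \<Longrightarrow> open (dom_c \<alpha>)"
  by (simp_all add: is_chart_def)

lemma chart_map_in_ran: "m \<in> dom_c \<alpha> \<Longrightarrow> map_c \<alpha> m \<in> ran_c \<alpha>"
  by (simp add: ran_c_def)

lemma chart_inv_in_dom: "x \<in> ran_c \<alpha> \<Longrightarrow> chart_inv \<alpha> x \<in> dom_c \<alpha>"
  by (simp add: chart_inv_def ran_c_def inv_into_into)

lemma chart_map_inv: "x \<in> ran_c \<alpha> \<Longrightarrow> map_c \<alpha> (chart_inv \<alpha> x) = x"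
  by (simp add: chart_inv_def ran_c_def f_inv_into_f)

lemma chart_inv_map:
  assumes "is_chart \<alpha>" "m \<in> dom_c \<alpha>" shows "chart_inv \<alpha> (map_c \<alpha> m) = m"
proof -
  obtain g where "homeomorphism (dom_c \<alpha>) (ran_c \<alpha>) (map_c \<alpha>) g"
    using assms(1) is_chart_def by blast
  then have "inj_on (map_c \<alpha>) (dom_c \<alpha>)"
    unfolding homeomorphism_def by (intro inj_on_inverseI[of _ g]) auto
  then show ?thesis using assms(2) by (simp add: chart_inv_def)
qed

lemma chart_continuous: "is_chart \<alpha> \<Longrightarrow> continuous_on (dom_c \<alpha>) (map_c \<alpha>)"
  unfolding is_chart_def homeomorphism_def by blast

lemma chart_inv_continuous:
  assumes "is_chart \<alpha>" shows "continuous_on (ran_c \<alpha>) (chart_inv \<alpha>)"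
proof -
  obtain g where g: "homeomorphism (dom_c \<alpha>) (ran_c \<alpha>) (map_c \<alpha>) g"
    using assms is_chart_def by blast
  have "g x = chart_inv \<alpha> x" if "x \<in> ran_c \<alpha>" for x
    using g that chart_inv_map[OF assms] unfolding homeomorphism_def ran_c_def by auto
  moreover have "continuous_on (ran_c \<alpha>) g" using g unfolding homeomorphism_def by blast
  ultimately show ?thesis using continuous_on_eq by blast
qed

lemma chart_tendsto_inv:
  assumes "is_chart \<alpha>" "\<And>k. m k \<in> dom_c \<alpha>" "(\<lambda>k. map_c \<alpha> (m k)) \<longlonglongrightarrow> p" "p \<in> ran_c \<alpha>"
  shows "m \<longlonglongrightarrow> chart_inv \<alpha> p"
proof -
  have "(\<lambda>k. chart_inv \<alpha> (map_c \<alpha> (m k))) \<longlonglongrightarrow> chart_inv \<alpha> p"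
    using continuous_on_tendsto_compose[OF chart_inv_continuous[OF assms(1)] assms(3,4)]
    by (simp add: chart_map_in_ran assms(2))
  then show ?thesis using chart_inv_map[OF assms(1) assms(2)] by simp
qed

lemma chart_seq_to_closure:
  assumes "x \<in> closure (ran_c \<alpha>)"
  obtains s where "\<And>i. s i \<in> dom_c \<alpha>" "(\<lambda>i. map_c \<alpha> (s i)) \<longlonglongrightarrow> x"
proof -
  obtain z where z: "\<forall>n. z n \<in> ran_c \<alpha>" "z \<longlonglongrightarrow> x" using assms closure_sequential by blast
  then have "\<forall>i. chart_inv \<alpha> (z i) \<in> dom_c \<alpha>" "(\<lambda>i. map_c \<alpha> (chart_inv \<alpha> (z i))) = z"
    by (simp_all add: chart_inv_in_dom chart_map_inv)
  then show ?thesis using that z(2) by metis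
qed

text \<open>Continuity of the transition map: points of ran \<beta> near a chart image y of a point
  also in dom \<alpha> are carried by \<alpha> close to the corresponding x.\<close>
lemma chart_transition_near:
  assumes \<alpha>: "is_chart \<alpha>" and \<beta>: "is_chart \<beta>"
    and xy: "x \<in> ran_c \<alpha>" "y \<in> ran_c \<beta>" "chart_inv \<alpha> x = chart_inv \<beta> y" and "\<epsilon> > 0"
  shows "\<exists>\<delta>>0. \<forall>z\<in>ran_c \<beta>. dist z y < \<delta> \<longrightarrow>
           chart_inv \<beta> z \<in> dom_c \<alpha> \<and> dist (map_c \<alpha> (chart_inv \<beta> z)) x < \<epsilon>"
proof -
  define H where "H = ran_c \<beta> \<inter> chart_inv \<beta> -` (dom_c \<alpha> \<inter> map_c \<alpha> -` ball x \<epsilon>)"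
  have "open (dom_c \<alpha> \<inter> map_c \<alpha> -` ball x \<epsilon>)"
    using continuous_open_preimage[OF chart_continuous[OF \<alpha>] chart_open_dom[OF \<alpha>]] by simp
  then have "open H"
    unfolding H_def by (rule continuous_open_preimage[OF chart_inv_continuous[OF \<beta>] chart_open_ran[OF \<beta>]])
  moreover have "y \<in> H"
    using xy \<open>\<epsilon> > 0\<close> chart_inv_in_dom[OF xy(1)] chart_map_inv[OF xy(1)] by (simp add: H_def)
  ultimately obtain \<delta> where "\<delta> > 0" "ball y \<delta> \<subseteq> H" using open_contains_ball_eq by blast
  then show ?thesis unfolding H_def by (force simp: dist_commute)
qed

lemma covers_refl: "covers \<alpha> U V \<alpha> U V"
  unfolding covers_def
proof (intro allI impI)
  fix y assume "(\<forall>i. y i \<in> dom_c \<alpha>) \<and> (\<exists>z\<in>V. seq_acc (\<lambda>i. map_c \<alpha> (y i)) z)"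
  then show "\<exists>r. strict_mono r \<and> (\<forall>i. y (r i) \<in> dom_c \<alpha>) \<and> (\<exists>z\<in>V. seq_acc (\<lambda>i. map_c \<alpha> (y (r i))) z)"
    by (intro exI[of _ id]) (simp add: strict_mono_def)
qed

lemma covers_trans:
  assumes "covers \<alpha> U V \<beta> X Y" "covers \<beta> X Y \<gamma> Z W"
  shows "covers \<alpha> U V \<gamma> Z W"
  unfolding covers_def
proof (intro allI impI)
  fix y assume y: "(\<forall>i. y i \<in> dom_c \<gamma>) \<and> (\<exists>z\<in>W. seq_acc (\<lambda>i. map_c \<gamma> (y i)) z)"
  then obtain r where r: "strict_mono r" "\<forall>i. y (r i) \<in> dom_c \<beta>"
      "\<exists>z\<in>Y. seq_acc (\<lambda>i. map_c \<beta> (y (r i))) z"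
    using assms(2) unfolding covers_def by blast
  then have "(\<forall>i. (y \<circ> r) i \<in> dom_c \<beta>) \<and> (\<exists>z\<in>Y. seq_acc (\<lambda>i. map_c \<beta> ((y \<circ> r) i)) z)"
    by simp
  then obtain r' where r': "strict_mono r'" "\<forall>i. (y \<circ> r) (r' i) \<in> dom_c \<alpha>"
      "\<exists>z\<in>V. seq_acc (\<lambda>i. map_c \<alpha> ((y \<circ> r) (r' i))) z"
    using assms(1)[unfolded covers_def, rule_format] by blast
  show "\<exists>r. strict_mono r \<and> (\<forall>i. y (r i) \<in> dom_c \<alpha>) \<and> (\<exists>z\<in>V. seq_acc (\<lambda>i. map_c \<alpha> (y (r i))) z)"
    using r r' by (intro exI[of _ "r \<circ> r'"]) (auto simp: strict_mono_def)
qed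

lemma bequiv_refl: "bequiv \<alpha> U V \<alpha> U V"
  by (simp add: bequiv_def covers_refl)

lemma bequiv_sym: "bequiv \<alpha> U V \<beta> X Y \<Longrightarrow> bequiv \<beta> X Y \<alpha> U V"
  by (simp add: bequiv_def)

lemma bequiv_trans: "bequiv \<alpha> U V \<beta> X Y \<Longrightarrow> bequiv \<beta> X Y \<gamma> Z W \<Longrightarrow> bequiv \<alpha> U V \<gamma> Z W"
  unfolding bequiv_def using covers_trans by blast

lemma bequiv_same_chart_eq:
  assumes "bequiv \<alpha> U {x} \<alpha> U {x'}" "x \<in> closure (ran_c \<alpha>)"
  shows "x = x'"
proof -
  obtain s where s: "\<And>i. s i \<in> dom_c \<alpha>" "(\<lambda>i. map_c \<alpha> (s i)) \<longlonglongrightarrow> x"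
    using chart_seq_to_closure[OF assms(2)] by blast
  then have "(\<forall>i. s i \<in> dom_c \<alpha>) \<and> (\<exists>z\<in>{x}. seq_acc (\<lambda>i. map_c \<alpha> (s i)) z)"
    using lim_imp_seq_acc by blast
  moreover have "covers \<alpha> U {x'} \<alpha> U {x}" using assms(1) by (simp add: bequiv_def)
  ultimately obtain r where r: "strict_mono r" "\<exists>z\<in>{x'}. seq_acc (\<lambda>i. map_c \<alpha> (s (r i))) z"
    unfolding covers_def by blast
  then have "seq_acc ((\<lambda>i. map_c \<alpha> (s i)) \<circ> r) x'" by (simp add: comp_def)
  then show ?thesis
    using seq_acc_lim_unique LIMSEQ_subseq_LIMSEQ[OF s(2) r(1)] by metis
qed

lemma covers_transition_near:
  assumes cov: "covers \<alpha> U {x} \<beta> X {y}" and "\<epsilon> > 0"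
  shows "\<exists>\<delta>>0. \<forall>z\<in>ran_c \<beta>. dist z y < \<delta> \<longrightarrow>
           chart_inv \<beta> z \<in> dom_c \<alpha> \<and> dist (map_c \<alpha> (chart_inv \<beta> z)) x < \<epsilon>"
proof (rule ccontr)
  assume "\<not> ?thesis"
  then have "\<forall>k. \<exists>z. z \<in> ran_c \<beta> \<and> dist z y < inverse (real (Suc k)) \<and>
       \<not> (chart_inv \<beta> z \<in> dom_c \<alpha> \<and> dist (map_c \<alpha> (chart_inv \<beta> z)) x < \<epsilon>)"
    by (metis inverse_positive_iff_positive of_nat_0_less_iff zero_less_Suc)
  then obtain z where z: "\<And>k. z k \<in> ran_c \<beta>" "\<And>k. dist (z k) y < inverse (real (Suc k))"
     "\<And>k. \<not> (chart_inv \<beta> (z k) \<in> dom_c \<alpha> \<and> dist (map_c \<alpha> (chart_inv \<beta> (z k))) x < \<epsilon>)"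
    by metis
  define s where "s k = chart_inv \<beta> (z k)" for k
  have "\<forall>i. s i \<in> dom_c \<beta>" "(\<lambda>i. map_c \<beta> (s i)) = z"
    using z(1) by (simp_all add: s_def chart_inv_in_dom chart_map_inv)
  then have "(\<forall>i. s i \<in> dom_c \<beta>) \<and> (\<exists>w\<in>{y}. seq_acc (\<lambda>i. map_c \<beta> (s i)) w)"
    using lim_imp_seq_acc[OF tendsto_of_dist_inverse_Suc[OF z(2)]] by simp
  then obtain r where r: "\<forall>i. s (r i) \<in> dom_c \<alpha>" "seq_acc (\<lambda>i. map_c \<alpha> (s (r i))) x"
    using cov unfolding covers_def by blast
  have "{i. map_c \<alpha> (s (r i)) \<in> ball x \<epsilon>} = {}"
    using z(3) r(1) unfolding s_def by (auto simp: dist_commute)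
  then show False
    using r(2) \<open>\<epsilon> > 0\<close> unfolding seq_acc_def by (metis finite.emptyI open_ball centre_in_ball)
qed

lemma rel_bdry_open:
  assumes "open U" "open S" "S \<subseteq> U"
  shows "rel_bdry U S = U \<inter> closure S - S"
proof -
  have "rel_bdry U S = U \<inter> frontier S"
    unfolding rel_bdry_def using assms(1) by (simp add: frontier_of_subtopology_open)
  also have "\<dots> = U \<inter> closure S - S" using assms(2) by (simp add: frontier_def interior_open) blast
  finally show ?thesis .
qed

lemma N_ext_open:
  assumes "open U" "open (ran_c \<alpha>)" "ran_c \<alpha> \<subseteq> U"
  shows "N_ext (\<alpha>, U) = U \<inter> closure (ran_c \<alpha>)"
  using rel_bdry_open[OF assms] assms(3) closure_subset by (auto simp: N_ext_def)

section \<open>The completion\<close>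

fun same_point :: "(('a::topological_space, 'n::finite) chart \<times> (real^'n) set) \<times> (real^'n) \<Rightarrow>
    (('a, 'n) chart \<times> (real^'n) set) \<times> (real^'n) \<Rightarrow> bool" where
  "same_point ((\<alpha>, U), x) ((\<beta>, X), y) \<longleftrightarrow>
     (x \<in> ran_c \<alpha> \<and> y \<in> ran_c \<beta> \<and> chart_inv \<alpha> x = chart_inv \<beta> y) \<or>
     (x \<in> rel_bdry U (ran_c \<alpha>) \<and> y \<in> rel_bdry X (ran_c \<beta>) \<and> bequiv \<alpha> U {x} \<beta> X {y})"

declare same_point.simps [simp del]

locale completion =
  fixes A :: "('a::{t2_space, second_countable_topology}, 'n::finite) chart set"
    and Q :: "(('a, 'n) chart \<times> (real^'n) set) set"
  assumes atlas: "maximal_smooth_atlas A"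
    and Q_EXT: "Q \<subseteq> EXT A"
    and Q_countable: "countable Q"
    and Q_compatible: "pairwise compatible_ext Q"
    and Q_manifolds: "\<forall>e\<in>Q. manifold_with_boundary TYPE('n) (N_top e)"
begin

abbreviation points :: "((('a, 'n) chart \<times> (real^'n) set) \<times> (real^'n)) set"
  where "points \<equiv> topspace (N_Q A Q)"
abbreviation gen_eq :: "((('a, 'n) chart \<times> (real^'n) set) \<times> (real^'n)) rel"
  where "gen_eq \<equiv> (ident A Q \<union> (ident A Q)\<inverse>)\<^sup>*"

definition proj :: "('a, 'n) chart \<times> (real^'n) set \<Rightarrow> real^'n \<Rightarrow>
    ((('a, 'n) chart \<times> (real^'n) set) \<times> (real^'n)) set"
  where "proj e x = gen_eq `` {(e, x)}"

lemma A_chart: "\<alpha> \<in> A \<Longrightarrow> is_chart \<alpha>"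
  using atlas unfolding maximal_smooth_atlas_def smooth_atlas_def by blast

lemma A_cover: "\<exists>\<alpha>\<in>A. m \<in> dom_c \<alpha>"
  using atlas unfolding maximal_smooth_atlas_def smooth_atlas_def by blast

lemma SQ_ext:
  assumes "(\<alpha>, U) \<in> S_Q A Q"
  shows "\<alpha> \<in> A" "open U" "ran_c \<alpha> \<subseteq> U" "rel_bdry U (ran_c \<alpha>) \<subseteq> adm_bdry \<alpha>"
proof -
  have "\<alpha> \<in> A \<and> open U \<and> ran_c \<alpha> \<subseteq> U \<and> rel_bdry U (ran_c \<alpha>) \<subseteq> adm_bdry \<alpha>"
  proof (cases "(\<alpha>, U) \<in> Q")
    case True
    then show ?thesis using Q_EXT unfolding EXT_def by auto
  next
    case False
    then have "\<alpha> \<in> A" "U = ran_c \<alpha>" using assms unfolding S_Q_def by auto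
    then show ?thesis using rel_bdry_open[of U U] chart_open_ran[OF A_chart] by auto
  qed
  then show "\<alpha> \<in> A" "open U" "ran_c \<alpha> \<subseteq> U" "rel_bdry U (ran_c \<alpha>) \<subseteq> adm_bdry \<alpha>" by auto
qed

lemma SQ_chart: "(\<alpha>, U) \<in> S_Q A Q \<Longrightarrow> is_chart \<alpha>"
  using SQ_ext(1) A_chart by blast

lemma SQ_N_ext:
  assumes "(\<alpha>, U) \<in> S_Q A Q" shows "N_ext (\<alpha>, U) = U \<inter> closure (ran_c \<alpha>)"
  using N_ext_open[OF SQ_ext(2)[OF assms] chart_open_ran[OF SQ_chart[OF assms]] SQ_ext(3)[OF assms]] .

lemma SQ_rel_bdry:
  assumes "(\<alpha>, U) \<in> S_Q A Q" shows "rel_bdry U (ran_c \<alpha>) = U \<inter> closure (ran_c \<alpha>) - ran_c \<alpha>"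
  using rel_bdry_open[OF SQ_ext(2)[OF assms] chart_open_ran[OF SQ_chart[OF assms]] SQ_ext(3)[OF assms]] .

lemma SQ_bdry_in_Q:
  assumes "(\<alpha>, U) \<in> S_Q A Q" "x \<in> rel_bdry U (ran_c \<alpha>)" shows "(\<alpha>, U) \<in> Q"
proof (rule ccontr)
  assume "(\<alpha>, U) \<notin> Q"
  then have "U = ran_c \<alpha>" using assms(1) unfolding S_Q_def by blast
  then show False using assms SQ_rel_bdry[OF assms(1)] by blast
qed

lemma points_iff: "(e, x) \<in> points \<longleftrightarrow> e \<in> S_Q A Q \<and> x \<in> N_ext e"
  by (simp add: N_Q_def N_top_def)

lemma N_ext_cases:
  assumes "x \<in> N_ext (\<alpha>, U)"
  obtains "x \<in> ran_c \<alpha>" | "x \<in> rel_bdry U (ran_c \<alpha>)"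
  using assms by (auto simp: N_ext_def)

lemma ident_points: "(u, v) \<in> ident A Q \<Longrightarrow> u \<in> points \<and> v \<in> points"
  unfolding ident_def by auto

lemma ident_iff_same_point:
  assumes "u \<in> points" "v \<in> points"
  shows "(u, v) \<in> ident A Q \<longleftrightarrow> same_point u v"
proof -
  obtain \<alpha> U x \<beta> X y where uv: "u = ((\<alpha>, U), x)" "v = ((\<beta>, X), y)" by (metis prod.collapse)
  have "(\<alpha>, U) \<in> S_Q A Q" "(\<beta>, X) \<in> S_Q A Q" using assms uv by (simp_all add: points_iff)
  then have \<alpha>: "is_chart \<alpha>" and \<beta>: "is_chart \<beta>" by (simp_all add: SQ_chart)
  have "(\<exists>m \<in> dom_c \<alpha> \<inter> dom_c \<beta>. map_c \<alpha> m = x \<and> map_c \<beta> m = y) \<longleftrightarrow>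
        chart_inv \<alpha> x = chart_inv \<beta> y" if "x \<in> ran_c \<alpha>" "y \<in> ran_c \<beta>"
    using that chart_inv_map[OF \<alpha>] chart_inv_map[OF \<beta>] chart_inv_in_dom chart_map_inv
    by (metis IntE IntI)
  then show ?thesis using assms unfolding uv ident_def same_point.simps by auto
qed

lemma same_point_refl: "u \<in> points \<Longrightarrow> same_point u u"
  by (cases u) (auto simp: points_iff same_point.simps bequiv_refl elim: N_ext_cases)

lemma same_point_sym: "same_point u v \<Longrightarrow> same_point v u"
  by (cases u, cases v) (auto simp: same_point.simps dest: bequiv_sym)

text \<open>Transitivity needs that no point is both an interior and a boundary point of its piece.\<close>
lemma same_point_trans:
  assumes "same_point u v" "same_point v w" "v \<in> points" shows "same_point u w"
proof -
  obtain \<beta> X y where v: "v = ((\<beta>, X), y)" by (metis prod.collapse)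
  have "y \<in> rel_bdry X (ran_c \<beta>) \<Longrightarrow> y \<notin> ran_c \<beta>"
    using assms(3) SQ_rel_bdry unfolding v points_iff by blast
  then show ?thesis
    using assms(1,2) unfolding v by (cases u, cases w) (auto simp: same_point.simps intro: bequiv_trans)
qed

lemma gen_eq_iff:
  assumes "u \<in> points" shows "(u, v) \<in> gen_eq \<longleftrightarrow> v \<in> points \<and> same_point u v"
proof
  assume "(u, v) \<in> gen_eq"
  then show "v \<in> points \<and> same_point u v"
  proof (induction rule: rtrancl_induct)
    case base then show ?case using assms same_point_refl by blast
  next
    case (step w v)
    then have w: "w \<in> points" "same_point u w" by auto
    from step.hyps(2) have "v \<in> points \<and> same_point w v"
    proof
      assume "(w, v) \<in> ident A Q"
      then show ?thesis using ident_points ident_iff_same_point by blast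
    next
      assume "(w, v) \<in> (ident A Q)\<inverse>"
      then have "(v, w) \<in> ident A Q" by simp
      then show ?thesis using ident_points ident_iff_same_point same_point_sym by blast
    qed
    then show ?case using w same_point_trans by blast
  qed
next
  assume "v \<in> points \<and> same_point u v"
  then show "(u, v) \<in> gen_eq" using assms ident_iff_same_point by blast
qed

lemma proj_eq_iff:
  assumes "(e, x) \<in> points" "(f, y) \<in> points"
  shows "proj e x = proj f y \<longleftrightarrow> same_point (e, x) (f, y)"
proof
  assume "proj e x = proj f y"
  then have "((e, x), (f, y)) \<in> gen_eq" unfolding proj_def by blast
  then show "same_point (e, x) (f, y)" using gen_eq_iff assms by blast
next
  assume "same_point (e, x) (f, y)"
  then have "((e, x), (f, y)) \<in> gen_eq" using gen_eq_iff assms by blast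
  then show "proj e x = proj f y" unfolding proj_def by (rule equiv_closure_class_eq)
qed

lemma topspace_QM: "topspace (Q_M A Q) = (\<lambda>(e, x). proj e x) ` points"
  unfolding Q_M_def topspace_quotient_topology by (auto simp: quotient_def proj_def)

lemma QM_point_cases:
  assumes "c \<in> topspace (Q_M A Q)"
  obtains \<alpha> U x where "((\<alpha>, U), x) \<in> points" "c = proj (\<alpha>, U) x"
proof -
  obtain u where "u \<in> points" "c = (\<lambda>(e, x). proj e x) u" using assms topspace_QM by auto
  moreover obtain \<alpha> U x where "u = ((\<alpha>, U), x)" by (metis prod.collapse)
  ultimately show ?thesis using that by simp
qed

lemma proj_continuous: "e \<in> S_Q A Q \<Longrightarrow> continuous_map (N_top e) (Q_M A Q) (proj e)"
proof -
  assume e: "e \<in> S_Q A Q"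
  have "continuous_map (N_top e) (N_Q A Q) (\<lambda>x. (e, x))"
    unfolding N_Q_def using e by (rule continuous_map_component_injection)
  then show ?thesis
    using continuous_map_compose[OF _ continuous_map_quotient_projection]
    unfolding Q_M_def proj_def comp_def by blast
qed

lemma bdry_no_convergent_preimage:
  assumes "(\<alpha>, U) \<in> S_Q A Q" "p \<in> rel_bdry U (ran_c \<alpha>)"
    and "\<And>k. m k \<in> dom_c \<alpha>" "(\<lambda>k. map_c \<alpha> (m k)) \<longlonglongrightarrow> p" "m \<longlonglongrightarrow> z"
  shows False
proof -
  have "p \<in> adm_bdry \<alpha>" using SQ_ext(4)[OF assms(1)] assms(2) by blast
  then have "\<nexists>y. seq_acc m y" using assms(3,4) unfolding adm_bdry_def by blast
  then show False using lim_imp_seq_acc[OF assms(5)] by blast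
qed

text \<open>Two boundary points approached by the chart images of one sequence of M are
  identified: they lie in the same piece and coincide, or compatibility applies.\<close>
lemma bdry_limits_same_point:
  assumes eS: "(\<alpha>, U) \<in> S_Q A Q" and fS: "(\<beta>, X) \<in> S_Q A Q"
    and p: "p \<in> rel_bdry U (ran_c \<alpha>)" and q: "q \<in> rel_bdry X (ran_c \<beta>)"
    and m: "\<And>k. m k \<in> dom_c \<alpha>" "\<And>k. m k \<in> dom_c \<beta>"
    and lim: "(\<lambda>k. map_c \<alpha> (m k)) \<longlonglongrightarrow> p" "(\<lambda>k. map_c \<beta> (m k)) \<longlonglongrightarrow> q"
  shows "same_point ((\<alpha>, U), p) ((\<beta>, X), q)"
proof (cases "(\<alpha>, U) = (\<beta>, X)")
  case True
  then have "p = q" using lim LIMSEQ_unique by auto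
  then show ?thesis using True p by (simp add: same_point.simps bequiv_refl)
next
  case False
  have "(\<alpha>, U) \<in> Q" "(\<beta>, X) \<in> Q" using SQ_bdry_in_Q eS fS p q by blast+
  then have "compatible_ext (\<alpha>, U) (\<beta>, X)"
    using Q_compatible False unfolding pairwise_def by blast
  moreover have "in_contact \<alpha> p \<beta> q" unfolding in_contact_def using m lim by blast
  moreover have "p \<in> adm_bdry \<alpha> \<inter> U" "q \<in> adm_bdry \<beta> \<inter> X"
    using SQ_ext(4) SQ_rel_bdry eS fS p q by blast+
  ultimately have "bequiv \<alpha> U {p} \<beta> X {q}" unfolding compatible_ext_def by auto
  then show ?thesis using p q by (simp add: same_point.simps)
qed

text \<open>The key fact behind both the Hausdorff property and the openness of the projections:
  if one sequence of M has chart images converging to p in N_(\<alpha>,U) and to q in N_(\<beta>,X),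
  then p and q represent the same point of Q(M). Mixed interior/boundary limits are excluded
  by admissibility.\<close>
lemma limits_same_point:
  assumes u: "((\<alpha>, U), p) \<in> points" and v: "((\<beta>, X), q) \<in> points"
    and m: "\<And>k. m k \<in> dom_c \<alpha>" "\<And>k. m k \<in> dom_c \<beta>"
    and lim: "(\<lambda>k. map_c \<alpha> (m k)) \<longlonglongrightarrow> p" "(\<lambda>k. map_c \<beta> (m k)) \<longlonglongrightarrow> q"
  shows "same_point ((\<alpha>, U), p) ((\<beta>, X), q)"
proof -
  have eS: "(\<alpha>, U) \<in> S_Q A Q" "p \<in> N_ext (\<alpha>, U)" and fS: "(\<beta>, X) \<in> S_Q A Q" "q \<in> N_ext (\<beta>, X)"
    using u v by (simp_all add: points_iff)
  have \<alpha>: "is_chart \<alpha>" and \<beta>: "is_chart \<beta>" using SQ_chart eS(1) fS(1) by blast+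
  consider (interior) "p \<in> ran_c \<alpha>" "q \<in> ran_c \<beta>"
    | (p_bdry) "p \<in> rel_bdry U (ran_c \<alpha>)" "q \<in> ran_c \<beta>"
    | (q_bdry) "p \<in> ran_c \<alpha>" "q \<in> rel_bdry X (ran_c \<beta>)"
    | (both_bdry) "p \<in> rel_bdry U (ran_c \<alpha>)" "q \<in> rel_bdry X (ran_c \<beta>)"
    using eS(2) fS(2) by (auto elim!: N_ext_cases)
  then show ?thesis
  proof cases
    case interior
    have "m \<longlonglongrightarrow> chart_inv \<alpha> p" "m \<longlonglongrightarrow> chart_inv \<beta> q"
      using chart_tendsto_inv[OF \<alpha> m(1) lim(1)] chart_tendsto_inv[OF \<beta> m(2) lim(2)] interior by simp_all
    then show ?thesis using interior LIMSEQ_unique by (auto simp: same_point.simps)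
  next
    case p_bdry
    then show ?thesis
      using bdry_no_convergent_preimage[OF eS(1) _ m(1) lim(1) chart_tendsto_inv[OF \<beta> m(2) lim(2)]] by blast
  next
    case q_bdry
    then show ?thesis
      using bdry_no_convergent_preimage[OF fS(1) _ m(2) lim(2) chart_tendsto_inv[OF \<alpha> m(1) lim(1)]] by blast
  next
    case both_bdry
    then show ?thesis using bdry_limits_same_point[OF eS(1) fS(1) _ _ m lim] by blast
  qed
qed

text \<open>Identified points are related by a transition that is continuous at them: by chart
  continuity for interior points, by the covering property for boundary points.\<close>
lemma transition_near:
  assumes u: "((\<alpha>, U), x) \<in> points" and v: "((\<beta>, X), y) \<in> points"
    and same: "same_point ((\<alpha>, U), x) ((\<beta>, X), y)" and "\<epsilon> > 0"
  shows "\<exists>\<delta>>0. \<forall>z\<in>ran_c \<beta>. dist z y < \<delta> \<longrightarrow>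
           chart_inv \<beta> z \<in> dom_c \<alpha> \<and> dist (map_c \<alpha> (chart_inv \<beta> z)) x < \<epsilon>"
proof -
  have "(\<alpha>, U) \<in> S_Q A Q" "(\<beta>, X) \<in> S_Q A Q" using u v by (simp_all add: points_iff)
  then have "is_chart \<alpha>" "is_chart \<beta>" by (simp_all add: SQ_chart)
  then show ?thesis
    using same chart_transition_near[of \<alpha> \<beta> x y \<epsilon>] covers_transition_near[of \<alpha> U x \<beta> X y \<epsilon>] \<open>\<epsilon> > 0\<close>
    unfolding same_point.simps bequiv_def by blast
qed

lemma closure_ball_sequence:
  fixes S :: "'b::metric_space set"
  assumes "y' \<in> closure S" "dist y' y < \<delta>"
  obtains z where "\<And>n. z n \<in> S" "\<And>n. dist (z n) y < \<delta>" "z \<longlonglongrightarrow> y'"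
proof -
  have "y' \<in> ball y \<delta> \<inter> closure S" using assms by (simp add: dist_commute)
  then have "y' \<in> closure (ball y \<delta> \<inter> S)" using open_Int_closure_subset[OF open_ball] by blast
  then obtain z where "\<forall>n. z n \<in> ball y \<delta> \<inter> S" "z \<longlonglongrightarrow> y'" using closure_sequential by blast
  then show ?thesis by (intro that[of z]) (auto simp: dist_commute)
qed

text \<open>A point y' of N_(\<beta>,X) close to y is identified with a limit point t, within r of x,
  of the transition images of nearby points of ran \<beta>; limits_same_point identifies them.\<close>
lemma transition_limit_point:
  assumes eS: "(\<alpha>, U) \<in> S_Q A Q" and fS: "(\<beta>, X) \<in> S_Q A Q" and "cball x r \<subseteq> U"
    and near: "\<forall>z\<in>ran_c \<beta>. dist z y < \<delta> \<longrightarrow>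
                 chart_inv \<beta> z \<in> dom_c \<alpha> \<and> dist (map_c \<alpha> (chart_inv \<beta> z)) x < r"
    and y': "y' \<in> N_ext (\<beta>, X)" "dist y' y < \<delta>"
  shows "\<exists>t\<in>N_ext (\<alpha>, U). dist t x \<le> r \<and> same_point ((\<alpha>, U), t) ((\<beta>, X), y')"
proof -
  have "y' \<in> closure (ran_c \<beta>)" using y'(1) SQ_N_ext[OF fS] by simp
  then obtain z where z: "\<And>n. z n \<in> ran_c \<beta>" "\<And>n. dist (z n) y < \<delta>" "z \<longlonglongrightarrow> y'"
    using closure_ball_sequence y'(2) by metis
  define m where "m n = chart_inv \<beta> (z n)" for n
  define w where "w n = map_c \<alpha> (m n)" for n
  have m: "\<And>n. m n \<in> dom_c \<beta>" "\<And>n. map_c \<beta> (m n) = z n" "\<And>n. m n \<in> dom_c \<alpha>"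
    and w: "\<And>n. w n \<in> cball x r"
    using z(1) z(2) near unfolding m_def w_def
    by (simp_all add: chart_inv_in_dom chart_map_inv dist_commute less_imp_le)
  obtain t k where tk: "t \<in> cball x r" "strict_mono k" "(w \<circ> k) \<longlonglongrightarrow> t"
    using compact_imp_seq_compact[OF compact_cball, unfolded seq_compact_def] w by metis
  have "\<forall>n. (w \<circ> k) n \<in> ran_c \<alpha>" using m(3) by (simp add: w_def chart_map_in_ran)
  then have "t \<in> closure (ran_c \<alpha>)" using tk(3) closure_sequential by blast
  then have tN: "t \<in> N_ext (\<alpha>, U)" using tk(1) \<open>cball x r \<subseteq> U\<close> SQ_N_ext[OF eS] by blast
  have "same_point ((\<alpha>, U), t) ((\<beta>, X), y')"
  proof (rule limits_same_point[of _ _ _ _ _ _ "m \<circ> k"])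
    show "((\<alpha>, U), t) \<in> points" "((\<beta>, X), y') \<in> points"
      using tN y'(1) eS fS by (simp_all add: points_iff)
    show "(\<lambda>i. map_c \<alpha> ((m \<circ> k) i)) \<longlonglongrightarrow> t" using tk(3) by (simp add: w_def comp_def)
    show "(\<lambda>i. map_c \<beta> ((m \<circ> k) i)) \<longlonglongrightarrow> y'"
      using LIMSEQ_subseq_LIMSEQ[OF z(3) tk(2)] m(2) by (simp add: comp_def)
  qed (simp_all add: m)
  then show ?thesis using tN tk(1) by (auto simp: dist_commute)
qed

text \<open>Openness of the projections, pointwise: if x and y represent the same point, every
  point of N_(\<beta>,X) near y represents the same point as some point of N_(\<alpha>,U) near x.\<close>
lemma same_point_nearby:
  assumes u: "((\<alpha>, U), x) \<in> points" and v: "((\<beta>, X), y) \<in> points"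
    and same: "same_point ((\<alpha>, U), x) ((\<beta>, X), y)" and "\<epsilon> > 0"
  shows "\<exists>\<delta>>0. \<forall>y'\<in>N_ext (\<beta>, X). dist y' y < \<delta> \<longrightarrow>
           (\<exists>x'\<in>N_ext (\<alpha>, U). dist x' x < \<epsilon> \<and> same_point ((\<alpha>, U), x') ((\<beta>, X), y'))"
proof -
  have eS: "(\<alpha>, U) \<in> S_Q A Q" "x \<in> N_ext (\<alpha>, U)"
    and fS: "(\<beta>, X) \<in> S_Q A Q" using u v by (simp_all add: points_iff)
  then have "x \<in> U" using SQ_N_ext by blast
  obtain \<epsilon>1 where "\<epsilon>1 > 0" "ball x \<epsilon>1 \<subseteq> U"
    using SQ_ext(2)[OF eS(1)] \<open>x \<in> U\<close> open_contains_ball_eq by blast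
  define r where "r = min \<epsilon> \<epsilon>1 / 2"
  have r: "r > 0" "r < \<epsilon>" "cball x r \<subseteq> U"
    using \<open>\<epsilon> > 0\<close> \<open>\<epsilon>1 > 0\<close> \<open>ball x \<epsilon>1 \<subseteq> U\<close> unfolding r_def by auto
  obtain \<delta> where \<delta>: "\<delta> > 0" "\<forall>z\<in>ran_c \<beta>. dist z y < \<delta> \<longrightarrow>
      chart_inv \<beta> z \<in> dom_c \<alpha> \<and> dist (map_c \<alpha> (chart_inv \<beta> z)) x < r"
    using transition_near[OF u v same r(1)] by blast
  have "\<exists>x'\<in>N_ext (\<alpha>, U). dist x' x < \<epsilon> \<and> same_point ((\<alpha>, U), x') ((\<beta>, X), y')"
    if y': "y' \<in> N_ext (\<beta>, X)" "dist y' y < \<delta>" for y'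
  proof -
    obtain t where t: "t \<in> N_ext (\<alpha>, U)" "dist t x \<le> r" "same_point ((\<alpha>, U), t) ((\<beta>, X), y')"
      using transition_limit_point[OF eS(1) fS r(3) \<delta>(2) y'] by blast
    moreover have "dist t x < \<epsilon>" using t(2) r(2) by linarith
    ultimately show ?thesis by blast
  qed
  then show ?thesis using \<delta>(1) by blast
qed

lemma same_point_fiber_open:
  assumes eS: "(\<alpha>, U) \<in> S_Q A Q" and G: "openin (N_top (\<alpha>, U)) G" and fS: "(\<beta>, X) \<in> S_Q A Q"
  shows "openin (N_top (\<beta>, X)) {y \<in> N_ext (\<beta>, X). \<exists>x\<in>G. same_point ((\<alpha>, U), x) ((\<beta>, X), y)}"
  unfolding N_top_def openin_euclidean_subtopology_iff
proof (intro conjI ballI)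
  fix y assume "y \<in> {y \<in> N_ext (\<beta>, X). \<exists>x\<in>G. same_point ((\<alpha>, U), x) ((\<beta>, X), y)}"
  then obtain x where x: "x \<in> G" "same_point ((\<alpha>, U), x) ((\<beta>, X), y)" and y: "y \<in> N_ext (\<beta>, X)"
    by blast
  obtain \<epsilon> where \<epsilon>: "\<epsilon> > 0" "\<forall>x'\<in>N_ext (\<alpha>, U). dist x' x < \<epsilon> \<longrightarrow> x' \<in> G"
    using G x(1) unfolding N_top_def openin_euclidean_subtopology_iff by blast
  have "x \<in> N_ext (\<alpha>, U)" using openin_subset[OF G] x(1) by (auto simp: N_top_def)
  then have "((\<alpha>, U), x) \<in> points" "((\<beta>, X), y) \<in> points" using eS fS y by (simp_all add: points_iff)
  then obtain \<delta> where "\<delta> > 0" "\<forall>y'\<in>N_ext (\<beta>, X). dist y' y < \<delta> \<longrightarrow>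
      (\<exists>x'\<in>N_ext (\<alpha>, U). dist x' x < \<epsilon> \<and> same_point ((\<alpha>, U), x') ((\<beta>, X), y'))"
    using same_point_nearby[OF _ _ x(2) \<epsilon>(1)] by blast
  then show "\<exists>\<delta>>0. \<forall>y'\<in>N_ext (\<beta>, X). dist y' y < \<delta> \<longrightarrow>
      y' \<in> {y \<in> N_ext (\<beta>, X). \<exists>x\<in>G. same_point ((\<alpha>, U), x) ((\<beta>, X), y)}"
    using \<epsilon>(2) by blast
qed auto

text \<open>Each projection is an open map, since the saturation of an open set is open in every
  piece of the disjoint union.\<close>
lemma proj_open:
  assumes eS: "e \<in> S_Q A Q" and G: "openin (N_top e) G"
  shows "openin (Q_M A Q) (proj e ` G)"
proof -
  obtain \<alpha> U where e: "e = (\<alpha>, U)" by (metis prod.collapse)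
  define S where "S = (\<lambda>x. (e, x)) ` G"
  have GN: "G \<subseteq> N_ext e" using openin_subset[OF G] by (simp add: N_top_def)
  then have S: "S \<subseteq> points" using eS unfolding S_def by (auto simp: points_iff)
  define F where "F f = {y \<in> N_ext f. \<exists>x\<in>G. same_point (e, x) (f, y)}" for f
  have "points \<inter> gen_eq `` S = Sigma (S_Q A Q) F"
  proof (intro equalityI subsetI)
    fix v assume "v \<in> points \<inter> gen_eq `` S"
    then obtain x where "x \<in> G" "((e, x), v) \<in> gen_eq" unfolding S_def by blast
    then show "v \<in> Sigma (S_Q A Q) F"
      using gen_eq_iff[of "(e, x)" v] GN eS unfolding F_def by (cases v) (auto simp: points_iff)
  next
    fix v assume "v \<in> Sigma (S_Q A Q) F"
    then obtain f y x where "v = (f, y)" "f \<in> S_Q A Q" "y \<in> N_ext f" "x \<in> G" "same_point (e, x) (f, y)"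
      unfolding F_def by blast
    then show "v \<in> points \<inter> gen_eq `` S"
      using gen_eq_iff[of "(e, x)" v] GN eS unfolding S_def by (auto simp: points_iff)
  qed
  moreover have "openin (N_top f) (F f)" if "f \<in> S_Q A Q" for f
  proof -
    obtain \<beta> X where f: "f = (\<beta>, X)" by (metis prod.collapse)
    show ?thesis
      unfolding F_def f e using same_point_fiber_open eS G that unfolding e f by blast
  qed
  ultimately have "openin (N_Q A Q) (points \<inter> gen_eq `` S)"
    unfolding N_Q_def by (simp add: openin_disjoint_union)
  moreover have "proj e ` G = (\<lambda>u. gen_eq `` {u}) ` S"
    unfolding S_def proj_def by (simp add: image_image)
  ultimately show ?thesis
    unfolding Q_M_def using openin_quotient_projection_image S by metis
qed

lemma proj_inj_on:
  assumes eS: "e \<in> S_Q A Q" shows "inj_on (proj e) (N_ext e)"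
proof (rule inj_onI)
  fix x x' assume x: "x \<in> N_ext e" and x': "x' \<in> N_ext e" and eq: "proj e x = proj e x'"
  obtain \<alpha> U where e: "e = (\<alpha>, U)" by (metis prod.collapse)
  have "same_point ((\<alpha>, U), x) ((\<alpha>, U), x')"
    using eq proj_eq_iff eS x x' unfolding e by (simp add: points_iff)
  then consider "x \<in> ran_c \<alpha>" "x' \<in> ran_c \<alpha>" "chart_inv \<alpha> x = chart_inv \<alpha> x'"
    | "bequiv \<alpha> U {x} \<alpha> U {x'}"
    unfolding same_point.simps by blast
  then show "x = x'"
  proof cases
    case 1
    then show ?thesis using chart_map_inv by metis
  next
    case 2
    moreover have "x \<in> closure (ran_c \<alpha>)" using x eS SQ_N_ext unfolding e by blast
    ultimately show ?thesis by (rule bequiv_same_chart_eq)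
  qed
qed

text \<open>Continuous, open and injective: each projection embeds open subsets of its piece.\<close>
lemma proj_embedding:
  assumes eS: "e \<in> S_Q A Q" and W: "openin (N_top e) W"
  shows "subtopology (N_top e) W homeomorphic_space subtopology (Q_M A Q) (proj e ` W)"
proof -
  have WN: "W \<subseteq> N_ext e" using openin_subset[OF W] by (simp add: N_top_def)
  then have ts: "topspace (subtopology (N_top e) W) = W" by (auto simp: N_top_def)
  have "embedding_map (subtopology (N_top e) W) (Q_M A Q) (proj e)"
  proof (rule injective_open_imp_embedding_map)
    show "continuous_map (subtopology (N_top e) W) (Q_M A Q) (proj e)"
      using proj_continuous[OF eS] continuous_map_from_subtopology by blast
    show "open_map (subtopology (N_top e) W) (Q_M A Q) (proj e)"
      unfolding open_map_def using proj_open[OF eS] openin_open_subtopology[OF W] by blast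
    show "inj_on (proj e) (topspace (subtopology (N_top e) W))"
      unfolding ts using proj_inj_on[OF eS] WN inj_on_subset by blast
  qed
  then show ?thesis
    unfolding embedding_map_def ts using homeomorphic_map_imp_homeomorphic_space by blast
qed

subsection \<open>Q(M) is Hausdorff\<close>

text \<open>Points that are not identified have chart images that no single point of M can
  approach simultaneously; otherwise limits_same_point would identify them.\<close>
lemma separation:
  assumes u: "((\<alpha>, U), p) \<in> points" and v: "((\<beta>, X), q) \<in> points"
    and distinct: "\<not> same_point ((\<alpha>, U), p) ((\<beta>, X), q)"
  shows "\<exists>\<epsilon>>0. \<forall>m\<in>dom_c \<alpha> \<inter> dom_c \<beta>. \<not> (dist (map_c \<alpha> m) p < \<epsilon> \<and> dist (map_c \<beta> m) q < \<epsilon>)"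
proof (rule ccontr)
  assume "\<not> ?thesis"
  then have "\<forall>k. \<exists>m. m \<in> dom_c \<alpha> \<inter> dom_c \<beta> \<and> dist (map_c \<alpha> m) p < inverse (real (Suc k))
     \<and> dist (map_c \<beta> m) q < inverse (real (Suc k))"
    by (metis inverse_positive_iff_positive of_nat_0_less_iff zero_less_Suc)
  then obtain m where m: "\<And>k. m k \<in> dom_c \<alpha>" "\<And>k. m k \<in> dom_c \<beta>"
    "\<And>k. dist (map_c \<alpha> (m k)) p < inverse (real (Suc k))"
    "\<And>k. dist (map_c \<beta> (m k)) q < inverse (real (Suc k))" by (metis IntE)
  show False
    using limits_same_point[OF u v m(1,2) tendsto_of_dist_inverse_Suc[OF m(3)]
        tendsto_of_dist_inverse_Suc[OF m(4)]] distinct by blast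
qed

text \<open>Hence small balls around non-identified points have disjoint images. It suffices to
  look at interior points of the first ball, which are dense and form an open set.\<close>
lemma proj_balls_disjoint:
  assumes eS: "(\<alpha>, U) \<in> S_Q A Q" and fS: "(\<beta>, X) \<in> S_Q A Q"
    and sep: "\<forall>m\<in>dom_c \<alpha> \<inter> dom_c \<beta>. \<not> (dist (map_c \<alpha> m) p < \<epsilon> \<and> dist (map_c \<beta> m) q < \<epsilon>)"
  shows "proj (\<alpha>, U) ` (N_ext (\<alpha>, U) \<inter> ball p \<epsilon>) \<inter> proj (\<beta>, X) ` (N_ext (\<beta>, X) \<inter> ball q \<epsilon>) = {}"
proof (rule ccontr)
  define B1 where "B1 = N_ext (\<alpha>, U) \<inter> ball p \<epsilon>"
  define B2 where "B2 = N_ext (\<beta>, X) \<inter> ball q \<epsilon>"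
  assume "\<not> ?thesis"
  then obtain z w where z: "z \<in> B1" and w: "w \<in> B2" and eq: "proj (\<alpha>, U) z = proj (\<beta>, X) w"
    unfolding B1_def B2_def by blast
  have oB1: "openin (N_top (\<alpha>, U)) B1" unfolding B1_def N_top_def by (rule openin_open_Int) simp
  have oB2: "openin (N_top (\<beta>, X)) B2" unfolding B2_def N_top_def by (rule openin_open_Int) simp
  define Oz where "Oz = {x \<in> B1. proj (\<alpha>, U) x \<in> proj (\<beta>, X) ` B2}"
  have "openin (N_top (\<alpha>, U)) Oz"
    unfolding Oz_def using openin_continuous_map_preimage_gen[OF proj_continuous[OF eS] oB1 proj_open[OF fS oB2]] .
  moreover have "z \<in> Oz" unfolding Oz_def using z w eq by blast
  ultimately obtain \<eta> where \<eta>: "\<eta> > 0" "\<forall>x'\<in>N_ext (\<alpha>, U). dist x' z < \<eta> \<longrightarrow> x' \<in> Oz"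
    unfolding N_top_def openin_euclidean_subtopology_iff by blast
  have "z \<in> closure (ran_c \<alpha>)" using z eS SQ_N_ext unfolding B1_def by blast
  then obtain z' where z': "z' \<in> ran_c \<alpha>" "dist z' z < \<eta>" using \<eta>(1) closure_approachable by blast
  then have "z' \<in> Oz" using \<eta>(2) by (simp add: N_ext_def)
  then obtain w' where w': "w' \<in> B2" "proj (\<alpha>, U) z' = proj (\<beta>, X) w'" and "z' \<in> B1"
    unfolding Oz_def by blast
  then have "same_point ((\<alpha>, U), z') ((\<beta>, X), w')"
    using proj_eq_iff eS fS unfolding B1_def B2_def by (simp add: points_iff)
  moreover have "z' \<notin> rel_bdry U (ran_c \<alpha>)" using z'(1) SQ_rel_bdry[OF eS] by blast
  ultimately have w'_int: "w' \<in> ran_c \<beta>" and ci: "chart_inv \<alpha> z' = chart_inv \<beta> w'"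
    unfolding same_point.simps by blast+
  have "chart_inv \<alpha> z' \<in> dom_c \<alpha>" "map_c \<alpha> (chart_inv \<alpha> z') = z'"
    using z'(1) by (simp_all add: chart_inv_in_dom chart_map_inv)
  moreover have "chart_inv \<alpha> z' \<in> dom_c \<beta>" "map_c \<beta> (chart_inv \<alpha> z') = w'"
    unfolding ci using w'_int by (simp_all add: chart_inv_in_dom chart_map_inv)
  ultimately have "chart_inv \<alpha> z' \<in> dom_c \<alpha> \<inter> dom_c \<beta>"
    "map_c \<alpha> (chart_inv \<alpha> z') = z'" "map_c \<beta> (chart_inv \<alpha> z') = w'" by simp_all
  then show False
    using sep \<open>z' \<in> B1\<close> w'(1) unfolding B1_def B2_def by (auto simp: dist_commute)
qed

lemma Hausdorff_QM: "Hausdorff_space (Q_M A Q)"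
  unfolding Hausdorff_space_def
proof (intro allI impI)
  fix c1 c2 assume c: "c1 \<in> topspace (Q_M A Q) \<and> c2 \<in> topspace (Q_M A Q) \<and> c1 \<noteq> c2"
  then obtain \<alpha> U p \<beta> X q where uv: "((\<alpha>, U), p) \<in> points" "((\<beta>, X), q) \<in> points"
    and c12: "c1 = proj (\<alpha>, U) p" "c2 = proj (\<beta>, X) q"
    by (metis QM_point_cases)
  then obtain \<epsilon> where \<epsilon>: "\<epsilon> > 0"
    "\<forall>m\<in>dom_c \<alpha> \<inter> dom_c \<beta>. \<not> (dist (map_c \<alpha> m) p < \<epsilon> \<and> dist (map_c \<beta> m) q < \<epsilon>)"
    using separation proj_eq_iff c by blast
  have eS: "(\<alpha>, U) \<in> S_Q A Q" "p \<in> N_ext (\<alpha>, U)" and fS: "(\<beta>, X) \<in> S_Q A Q" "q \<in> N_ext (\<beta>, X)"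
    using uv by (simp_all add: points_iff)
  have "openin (N_top (\<alpha>, U)) (N_ext (\<alpha>, U) \<inter> ball p \<epsilon>)"
    "openin (N_top (\<beta>, X)) (N_ext (\<beta>, X) \<inter> ball q \<epsilon>)"
    unfolding N_top_def by (simp_all add: openin_open_Int)
  then show "\<exists>U' V'. openin (Q_M A Q) U' \<and> openin (Q_M A Q) V' \<and> c1 \<in> U' \<and> c2 \<in> V' \<and> disjnt U' V'"
    using proj_open eS fS c12 \<epsilon> proj_balls_disjoint[OF eS(1) fS(1) \<epsilon>(2)] unfolding disjnt_def
    by (intro exI conjI) auto
qed

subsection \<open>Q(M) is second countable\<close>

text \<open>Countably many pieces of N_Q already represent every point of Q(M): the extensions in Q
  together with the trivial extensions of a countable (Lindeloef) subcover of the atlas.\<close>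
lemma countable_representatives:
  obtains E where "E \<subseteq> S_Q A Q" "countable E"
    "\<And>c. c \<in> topspace (Q_M A Q) \<Longrightarrow> \<exists>e\<in>E. \<exists>z\<in>N_ext e. c = proj e z"
proof -
  have "\<And>S. S \<in> dom_c ` A \<Longrightarrow> open S" using A_chart chart_open_dom by blast
  then obtain F where F: "F \<subseteq> dom_c ` A" "countable F" "\<Union>F = \<Union>(dom_c ` A)"
    using Lindelof by metis
  then obtain C where C: "countable C" "C \<subseteq> A" "F = dom_c ` C"
    using countable_subset_image by metis
  define E where "E = (\<lambda>\<alpha>. (\<alpha>, ran_c \<alpha>)) ` C \<union> Q"
  have ES: "E \<subseteq> S_Q A Q" unfolding E_def S_Q_def using C(2) by blast
  have "\<exists>e\<in>E. \<exists>z\<in>N_ext e. c = proj e z" if c: "c \<in> topspace (Q_M A Q)" for c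
  proof -
    obtain \<alpha> U x where x: "((\<alpha>, U), x) \<in> points" "c = proj (\<alpha>, U) x"
      using QM_point_cases[OF c] by blast
    then have eS: "(\<alpha>, U) \<in> S_Q A Q" "x \<in> N_ext (\<alpha>, U)" by (simp_all add: points_iff)
    show ?thesis
    proof (cases "x \<in> ran_c \<alpha>")
      case True
      obtain \<gamma> where \<gamma>: "\<gamma> \<in> C" "chart_inv \<alpha> x \<in> dom_c \<gamma>"
        using F(3) C(3) A_cover[of "chart_inv \<alpha> x"] by blast
      then have gS: "(\<gamma>, ran_c \<gamma>) \<in> E" "(\<gamma>, ran_c \<gamma>) \<in> S_Q A Q" using ES unfolding E_def by auto
      let ?z = "map_c \<gamma> (chart_inv \<alpha> x)"
      have zr: "?z \<in> ran_c \<gamma>" using \<gamma>(2) by (rule chart_map_in_ran)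
      then have zN: "?z \<in> N_ext (\<gamma>, ran_c \<gamma>)" by (simp add: N_ext_def)
      have "same_point ((\<alpha>, U), x) ((\<gamma>, ran_c \<gamma>), ?z)"
        using True zr chart_inv_map[OF A_chart \<gamma>(2)] C(2) \<gamma>(1) by (auto simp: same_point.simps)
      then have "c = proj (\<gamma>, ran_c \<gamma>) ?z"
        using proj_eq_iff x eS gS zN by (simp add: points_iff)
      then show ?thesis using gS(1) zN by blast
    next
      case False
      then have "x \<in> rel_bdry U (ran_c \<alpha>)" using eS(2) by (auto elim: N_ext_cases)
      then have "(\<alpha>, U) \<in> Q" using SQ_bdry_in_Q[OF eS(1)] by blast
      then show ?thesis using x(2) eS(2) unfolding E_def by blast
    qed
  qed
  moreover have "countable E" unfolding E_def using C(1) Q_countable by simp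
  ultimately show ?thesis using that ES by blast
qed

text \<open>A countable basis: images of the traces of a countable basis of R^n on the countably
  many representing pieces.\<close>
lemma second_countable_QM: "second_countable (Q_M A Q)"
proof -
  obtain E where E: "E \<subseteq> S_Q A Q" "countable E"
      "\<And>c. c \<in> topspace (Q_M A Q) \<Longrightarrow> \<exists>e\<in>E. \<exists>z\<in>N_ext e. c = proj e z"
    using countable_representatives by blast
  obtain B :: "(real^'n) set set" where B: "countable B" "\<And>b. b \<in> B \<Longrightarrow> open b"
      "\<And>S. open S \<Longrightarrow> \<exists>U. U \<subseteq> B \<and> S = \<Union>U"
    using univ_second_countable by blast
  define \<B> where "\<B> = (\<Union>e\<in>E. (\<lambda>b. proj e ` (N_ext e \<inter> b)) ` B)"
  show ?thesis
    unfolding second_countable_def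
  proof (intro exI conjI ballI allI impI)
    show "countable \<B>" unfolding \<B>_def using E(2) B(1) by blast
    fix V assume "V \<in> \<B>"
    then obtain e b where "e \<in> E" "b \<in> B" "V = proj e ` (N_ext e \<inter> b)" unfolding \<B>_def by blast
    moreover have "openin (N_top e) (N_ext e \<inter> b)"
      unfolding N_top_def using B(2)[OF \<open>b \<in> B\<close>] by (simp add: openin_open_Int)
    ultimately show "openin (Q_M A Q) V" using proj_open E(1) by blast
  next
    fix W c assume Wc: "openin (Q_M A Q) W \<and> c \<in> W"
    then obtain e z where ez: "e \<in> E" "z \<in> N_ext e" "c = proj e z"
      using E(3) openin_subset by blast
    have "openin (N_top e) {y \<in> topspace (N_top e). proj e y \<in> W}"
      using openin_continuous_map_preimage[OF proj_continuous] Wc E(1) ez(1) by blast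
    then obtain O1 where O1: "open O1" "{y \<in> N_ext e. proj e y \<in> W} = N_ext e \<inter> O1"
      unfolding N_top_def by (auto simp: openin_open)
    then have "z \<in> O1" using ez Wc by blast
    then obtain b where b: "b \<in> B" "z \<in> b" "b \<subseteq> O1" using B(3)[OF O1(1)] by blast
    show "\<exists>V\<in>\<B>. c \<in> V \<and> V \<subseteq> W"
    proof (intro bexI conjI)
      show "proj e ` (N_ext e \<inter> b) \<in> \<B>" unfolding \<B>_def using ez(1) b(1) by blast
      show "c \<in> proj e ` (N_ext e \<inter> b)" using ez b(2) by blast
      show "proj e ` (N_ext e \<inter> b) \<subseteq> W" using O1(2) b(3) by blast
    qed
  qed
qed

subsection \<open>Q(M) is locally a half space\<close>

text \<open>Every piece of N_Q is locally homeomorphic to open subsets of one fixed half space: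
  the trivial pieces are open in R^n, the others are manifolds with boundary by hypothesis.\<close>
lemma piece_locally_halfspace:
  fixes k :: 'n
  assumes eS: "e \<in> S_Q A Q" and x: "x \<in> N_ext e"
  obtains W V where "openin (N_top e) W" "x \<in> W" "openin (top_of_set (halfspace k)) V"
    "subtopology (N_top e) W homeomorphic_space top_of_set V"
proof (cases "e \<in> Q")
  case True
  then obtain k' :: 'n where "\<forall>p \<in> N_ext e. \<exists>W. openin (N_top e) W \<and> p \<in> W \<and>
        (\<exists>V. openin (top_of_set (halfspace k')) V \<and> subtopology (N_top e) W homeomorphic_space top_of_set V)"
    using Q_manifolds unfolding manifold_with_boundary_def by (auto simp: N_top_def)
  then obtain W V where W: "openin (N_top e) W" "x \<in> W" "openin (top_of_set (halfspace k')) V"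
      "subtopology (N_top e) W homeomorphic_space top_of_set V"
    using x by blast
  obtain V' where "openin (top_of_set (halfspace k)) V'" "top_of_set V homeomorphic_space top_of_set V'"
    using halfspace_change_coordinate[OF W(3)] by blast
  then show ?thesis using that[OF W(1,2)] W(4) homeomorphic_space_trans by blast
next
  case False
  then obtain \<alpha> where \<alpha>: "\<alpha> \<in> A" "e = (\<alpha>, ran_c \<alpha>)" using eS unfolding S_Q_def by blast
  then have "rel_bdry (ran_c \<alpha>) (ran_c \<alpha>) = {}" using SQ_rel_bdry eS by auto
  then have Ne: "N_ext e = ran_c \<alpha>" unfolding \<alpha>(2) N_ext_def by simp
  have "open (ran_c \<alpha>)" using chart_open_ran[OF A_chart[OF \<alpha>(1)]] .
  then show ?thesis
    using open_locally_halfspace[of "ran_c \<alpha>" x k] that x unfolding N_top_def Ne by blast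
qed

lemma QM_locally_halfspace:
  fixes k :: 'n
  assumes c: "c \<in> topspace (Q_M A Q)"
  shows "\<exists>W. openin (Q_M A Q) W \<and> c \<in> W \<and>
           (\<exists>V. openin (top_of_set (halfspace k)) V \<and>
                subtopology (Q_M A Q) W homeomorphic_space top_of_set V)"
proof -
  obtain \<alpha> U x where "((\<alpha>, U), x) \<in> points" and cx: "c = proj (\<alpha>, U) x"
    using QM_point_cases[OF c] by blast
  then have eS: "(\<alpha>, U) \<in> S_Q A Q" "x \<in> N_ext (\<alpha>, U)" by (simp_all add: points_iff)
  obtain W V where W: "openin (N_top (\<alpha>, U)) W" "x \<in> W" "openin (top_of_set (halfspace k)) V"
    "subtopology (N_top (\<alpha>, U)) W homeomorphic_space top_of_set V"
    using piece_locally_halfspace[OF eS] by blast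
  have "subtopology (Q_M A Q) (proj (\<alpha>, U) ` W) homeomorphic_space top_of_set V"
    using proj_embedding[OF eS(1) W(1)] W(4) homeomorphic_space_sym homeomorphic_space_trans by blast
  then show ?thesis using proj_open[OF eS(1) W(1)] W(2,3) cx by blast
qed

end

theorem mainTheorem9:
  fixes A :: "('a::{t2_space, second_countable_topology}, 'n::finite) chart set"
    and Q :: "(('a, 'n) chart \<times> (real^'n) set) set"
  assumes "maximal_smooth_atlas A"
    and "Q \<subseteq> EXT A"
    and "countable Q"
    and "pairwise compatible_ext Q"
    and "\<forall>e\<in>Q. manifold_with_boundary TYPE('n) (N_top e)"
  shows "manifold_with_boundary TYPE('n) (Q_M A Q)"
proof -
  interpret completion A Q using assms by unfold_locales
  have "Hausdorff_space (Q_M A Q)" by (rule Hausdorff_QM)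
  moreover have "second_countable (Q_M A Q)" by (rule second_countable_QM)
  moreover have "\<forall>c \<in> topspace (Q_M A Q). \<exists>W. openin (Q_M A Q) W \<and> c \<in> W \<and>
      (\<exists>V. openin (top_of_set (halfspace k)) V \<and> subtopology (Q_M A Q) W homeomorphic_space top_of_set V)"
    for k :: 'n
    using QM_locally_halfspace by blast
  ultimately show ?thesis unfolding manifold_with_boundary_def by blast
qed

end
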